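(* Let $(X_i)_{i\in\mathbb{N}}$ be a GBP-I with parameters $p,H,c$ satisfying the standing assumption and $H\in(1/2,1)$. Then for every $k\ge2$, as $n\to\infty$, \[ \sum_{\substack{i_1,\dots,i_k\in\{1,\dots,n\}\\ i_1<\dots<i_k}}P\Big(\bigcap_{j=1}^k\{X_{i_j}=1\}\Big)=\binom{n}{k}p^k+\frac{\Gamma(2H-1)}{\Gamma(2H+k-1)}\,\frac{(k-1)!}{(k-2)!}\,c\,p^{k-1}\,n^{2H-2+k}+o\big(n^{2H-2+k}\big). \]
   Context: Standing assumption on GBP-I parameters: $p,H\in(0,1)$ and $0\le c<\min\{1-p,\ \tfrac12(-2p+2^{2H-2}+\sqrt{4p-p2^{2H}+2^{4H-4}})\}$. A GBP-I is a $\{0,1\}$-valued process $(X_i)_{i\in\mathbb{N}}$ with $P(X_{i_0}=X_{i_1}=\dots=X_{i_n}=1)=p\prod_{j=1}^n(p+c|i_j-i_{j-1}|^{2H-2})$ for $i_0<i_1<\dots<i_n$ (with the remaining joint probabilities determined by inclusion–exclusion). *)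

theory Defs
  imports "HOL-Probability.Probability" "HOL-Library.Landau_Symbols"
begin

definition gbp_params :: "real \<Rightarrow> real \<Rightarrow> real \<Rightarrow> bool" where
  "gbp_params p H c \<longleftrightarrow> 0 < p \<and> p < 1 \<and> 0 < H \<and> H < 1 \<and> 0 \<le> c \<and>
     c < min (1 - p)
       ((1/2) * (- 2 * p + 2 powr (2*H - 2)
          + sqrt (4 * p - p * 2 powr (2*H) + 2 powr (4*H - 4))))"

definition GBP_I :: "'a measure \<Rightarrow> (nat \<Rightarrow> 'a \<Rightarrow> nat) \<Rightarrow> real \<Rightarrow> real \<Rightarrow> real \<Rightarrow> bool" where
  "GBP_I M X p H c \<longleftrightarrow> prob_space M \<and> gbp_params p H c \<and>
     (\<forall>i. X i \<in> measurable M (count_space UNIV)) \<and>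
     (\<forall>i. \<forall>\<omega>\<in>space M. X i \<omega> \<in> {0, 1}) \<and>
     (\<forall>is. is \<noteq> [] \<longrightarrow> sorted_wrt (<) is \<longrightarrow>
        measure M {\<omega> \<in> space M. \<forall>i\<in>set is. X i \<omega> = 1} =
        p * (\<Prod>j\<in>{1..<length is}.
               (p + c * (real (is ! j) - real (is ! (j - 1))) powr (2*H - 2))))"

end

theory Submission
  imports Defs "HOL-Real_Asymp.Real_Asymp"
begin

text \<open>
  For \<open>S = {i_1 < ... < i_k}\<close> with gaps \<open>d_j = i_(j+1) - i_j\<close>, the GBP-I formula reads
  \<open>P(S) = p * prod_j (p + c d_j^\<alpha>)\<close> with \<open>\<alpha> = 2H - 2 \<in> (-1, 0)\<close>. Expanding the product to
  first order, \<open>P(S) = p^k + c p^(k-1) sum_j d_j^\<alpha> + R(S)\<close> with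
  \<open>0 \<le> R(S) \<le> p (k-1) c^2 sum_j d_j^(2\<alpha>)\<close>. Peeling off the minimum of \<open>S\<close> shows that summing
  the gap sum \<open>sum_j h(d_j)\<close> over all \<open>k\<close>-subsets of \<open>{1..n}\<close> gives
  \<open>(k-1) sum_j h(j) C(n-j, k-1)\<close>, a \<open>(k-1)\<close>-fold iterated partial sum of \<open>sum_j h(j)\<close>. For
  \<open>h(j) = j^\<gamma>\<close> with \<open>\<gamma> > -1\<close>, starting from \<open>sum_(j\<le>n) j^\<gamma> ~ n^(\<gamma>+1)/(\<gamma>+1)\<close> this is
  asymptotic to \<open>(k-1) n^(\<gamma>+k) / pochhammer (\<gamma>+1) k\<close>. With \<open>\<gamma> = \<alpha>\<close> this is the
  second-order term; the remainder has exponent \<open>2\<alpha> < \<alpha>\<close> and is of smaller order.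
\<close>

section \<open>Gaps of a finite set of indices\<close>

fun gaps :: "nat list \<Rightarrow> nat list" where
  "gaps (a # b # l) = (b - a) # gaps (b # l)"
| "gaps _ = []"

lemma length_gaps: "length (gaps l) = length l - 1"
  by (induction l rule: gaps.induct) auto

lemma gaps_pos: "sorted_wrt (<) l \<Longrightarrow> d \<in> set (gaps l) \<Longrightarrow> 0 < d"
  by (induction l rule: gaps.induct) auto

lemma prod_consecutive_diff_eq_prod_gaps:
  "sorted_wrt (<) l \<Longrightarrow>
   (\<Prod>j\<in>{1..<length l}. \<phi> (real (l ! j) - real (l ! (j - 1)))) = (\<Prod>d\<leftarrow>gaps l. \<phi> (real d))"
proof (induction l rule: gaps.induct)
  case (1 a b l)
  let ?d = "\<lambda>l j. \<phi> (real (l ! j) - real (l ! (j - 1)))"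
  have "(\<Prod>j\<in>{1..<length (a # b # l)}. ?d (a # b # l) j)
      = \<phi> (real b - real a) * (\<Prod>j\<in>{Suc 1..<Suc (length (b # l))}. ?d (a # b # l) j)"
    by (subst prod.atLeast_Suc_lessThan) auto
  also have "(\<Prod>j\<in>{Suc 1..<Suc (length (b # l))}. ?d (a # b # l) j) = (\<Prod>j\<in>{1..<length (b # l)}. ?d (b # l) j)"
    by (subst prod.shift_bounds_Suc_ivl) (auto intro!: prod.cong simp: nth_Cons')
  finally show ?case
    using 1 by (simp add: of_nat_diff)
qed auto

definition gap_sum :: "(nat \<Rightarrow> real) \<Rightarrow> nat set \<Rightarrow> real" where
  "gap_sum h S = sum_list (map h (gaps (sorted_list_of_set S)))"

lemma gap_sum_insert_less:
  assumes "finite S" "S \<noteq> {}" "\<forall>x\<in>S. i < x"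
  shows "gap_sum h (insert i S) = h (Min S - i) + gap_sum h S"
proof -
  have "sorted_list_of_set (insert i S) = i # sorted_list_of_set S"
    using assms by (intro sorted_list_of_set_unique[THEN iffD1]) auto
  then show ?thesis
    using assms sorted_list_of_set_nonempty[of S] by (simp add: gap_sum_def)
qed

section \<open>Gap sums over all subsets of a given size\<close>

lemma sum_subsets_split_Min:
  fixes F :: "nat set \<Rightarrow> 'a::comm_monoid_add"
  shows "(\<Sum>S | S \<subseteq> {a..n} \<and> card S = Suc k. F S) =
         (\<Sum>i = a..n. \<Sum>S | S \<subseteq> {Suc i..n} \<and> card S = k. F (insert i S))"
proof -
  have fin: "finite {S. S \<subseteq> {Suc i..n} \<and> card S = k}" for i
    by (rule finite_subset[of _ "Pow {Suc i..n}"]) auto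
  have "(\<Sum>i = a..n. \<Sum>S | S \<subseteq> {Suc i..n} \<and> card S = k. F (insert i S))
      = (\<Sum>(i, S)\<in>Sigma {a..n} (\<lambda>i. {S. S \<subseteq> {Suc i..n} \<and> card S = k}). F (insert i S))"
    using fin by (intro sum.Sigma) auto
  also have "\<dots> = (\<Sum>S | S \<subseteq> {a..n} \<and> card S = Suc k. F S)"
  proof (rule sum.reindex_bij_witness[where i = "\<lambda>S. (Min S, S - {Min S})" and j = "\<lambda>(i, S). insert i S"])
    fix x assume x: "x \<in> Sigma {a..n} (\<lambda>i. {S. S \<subseteq> {Suc i..n} \<and> card S = k})"
    then obtain i S where x_eq: "x = (i, S)" and S: "S \<subseteq> {Suc i..n}" "card S = k" "i \<in> {a..n}"
      by auto
    then have "finite S" "i \<notin> S"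
      by (auto intro: finite_subset)
    moreover have "Min (insert i S) = i"
      using S \<open>finite S\<close> by (auto intro!: Min_eqI)
    ultimately show "(Min (case x of (i, S) \<Rightarrow> insert i S),
                (case x of (i, S) \<Rightarrow> insert i S) - {Min (case x of (i, S) \<Rightarrow> insert i S)}) = x"
      and "(case x of (i, S) \<Rightarrow> insert i S) \<in> {S. S \<subseteq> {a..n} \<and> card S = Suc k}"
      and "F (case x of (i, S) \<Rightarrow> insert i S) = (case x of (i, S) \<Rightarrow> F (insert i S))"
      using x_eq S by auto
  next
    fix S assume S: "S \<in> {S. S \<subseteq> {a..n} \<and> card S = Suc k}"
    then have "finite S" "S \<noteq> {}" by (auto intro: finite_subset)
    then have "Min S \<in> S" "\<forall>x\<in>S - {Min S}. Min S < x"
      by (auto simp: order.strict_iff_order)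
    then show "(case (Min S, S - {Min S}) of (i, S) \<Rightarrow> insert i S) = S"
      and "(Min S, S - {Min S}) \<in> Sigma {a..n} (\<lambda>i. {S. S \<subseteq> {Suc i..n} \<and> card S = k})"
      using S \<open>finite S\<close> by (auto simp: Suc_le_eq subset_iff)
  qed
  finally show ?thesis ..
qed

definition binom_conv :: "(nat \<Rightarrow> real) \<Rightarrow> nat \<Rightarrow> nat \<Rightarrow> real" where
  "binom_conv h k r = (\<Sum>j = 1..r. h j * real (r - j choose k))"

lemma binom_conv_Suc_Suc:
  "binom_conv h (Suc k) (Suc r) = binom_conv h (Suc k) r + binom_conv h k r"
proof -
  have "binom_conv h (Suc k) (Suc r) = (\<Sum>j = 1..r. h j * real (Suc (r - j) choose Suc k))"
    unfolding binom_conv_def by (simp add: sum.cl_ivl_Suc Suc_diff_le)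
  then show ?thesis
    unfolding binom_conv_def by (simp add: sum.distrib algebra_simps)
qed

lemma binom_conv_Suc_eq_sum: "binom_conv h (Suc k) m = (\<Sum>r<m. binom_conv h k r)"
  by (induction m) (simp_all add: binom_conv_Suc_Suc, simp add: binom_conv_def)

lemma binom_conv_mono:
  assumes "\<And>j. 1 \<le> j \<Longrightarrow> h j \<le> g j"
  shows "binom_conv h k r \<le> binom_conv g k r"
  unfolding binom_conv_def using assms by (intro sum_mono mult_right_mono) auto

lemma sum_reflect_atLeastAtMost: "(\<Sum>i = a..n. g (n - i)) = (\<Sum>r<Suc n - a. g r)"
  by (rule sum.reindex_bij_witness[where i = "\<lambda>r. n - r" and j = "\<lambda>i. n - i"]) auto

lemma sum_subsets_Min_eq_binom_conv:
  assumes "i \<le> n"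
  shows "(\<Sum>S | S \<subseteq> {Suc i..n} \<and> card S = Suc k. h (Min S - i)) = binom_conv h k (n - i)"
proof -
  have "(\<Sum>S | S \<subseteq> {Suc i..n} \<and> card S = Suc k. h (Min S - i))
      = (\<Sum>j = Suc i..n. \<Sum>S | S \<subseteq> {Suc j..n} \<and> card S = k. h (Min (insert j S) - i))"
    by (rule sum_subsets_split_Min)
  also have "\<dots> = (\<Sum>j = Suc i..n. h (j - i) * real (n - j choose k))"
  proof (intro sum.cong refl)
    fix j
    have "Min (insert j S) = j" if "S \<subseteq> {Suc j..n}" for S
      using that by (auto intro!: Min_eqI intro: finite_subset)
    then show "(\<Sum>S | S \<subseteq> {Suc j..n} \<and> card S = k. h (Min (insert j S) - i))
                 = h (j - i) * real (n - j choose k)"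
      by (simp add: n_subsets)
  qed
  also have "\<dots> = (\<Sum>j = 1..n - i. h j * real (n - i - j choose k))"
    using assms by (intro sum.reindex_bij_witness[where i = "\<lambda>j. j + i" and j = "\<lambda>j. j - i"]) auto
  finally show ?thesis by (simp add: binom_conv_def)
qed

lemma sum_subsets_gap_sum:
  "(\<Sum>S | S \<subseteq> {a..n} \<and> card S = Suc k. gap_sum h S) = real k * binom_conv h k (Suc n - a)"
proof (induction k arbitrary: a)
  case 0
  have "gap_sum h {x} = 0" for x
    by (simp add: gap_sum_def)
  then show ?case
    by (auto intro!: sum.neutral simp: card_1_singleton_iff)
next
  case (Suc k)
  have "(\<Sum>S | S \<subseteq> {a..n} \<and> card S = Suc (Suc k). gap_sum h S)
      = (\<Sum>i = a..n. \<Sum>S | S \<subseteq> {Suc i..n} \<and> card S = Suc k. gap_sum h (insert i S))"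
    by (rule sum_subsets_split_Min)
  also have "\<dots> = (\<Sum>i = a..n. \<Sum>S | S \<subseteq> {Suc i..n} \<and> card S = Suc k. h (Min S - i) + gap_sum h S)"
  proof (intro sum.cong refl)
    fix i S
    assume "S \<in> {S. S \<subseteq> {Suc i..n} \<and> card S = Suc k}"
    then show "gap_sum h (insert i S) = h (Min S - i) + gap_sum h S"
      by (intro gap_sum_insert_less) (auto intro: finite_subset)
  qed
  also have "\<dots> = (\<Sum>i = a..n. real (Suc k) * binom_conv h k (n - i))"
    by (intro sum.cong refl) (simp add: sum.distrib sum_subsets_Min_eq_binom_conv Suc.IH algebra_simps)
  also have "\<dots> = (\<Sum>r<Suc n - a. real (Suc k) * binom_conv h k r)"
    by (rule sum_reflect_atLeastAtMost)
  also have "\<dots> = real (Suc k) * binom_conv h (Suc k) (Suc n - a)"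
    by (simp only: binom_conv_Suc_eq_sum sum_distrib_left)
  finally show ?case .
qed

section \<open>First-order expansion of the joint probabilities\<close>

lemma two_mult_sum_list_le:
  fixes y :: real
  shows "2 * y * sum_list zs \<le> real (length zs) * y\<^sup>2 + sum_list (map (\<lambda>z. z\<^sup>2) zs)"
proof (induction zs)
  case (Cons z zs)
  then show ?case
    using sum_squares_bound[of y z] by (simp add: algebra_simps)
qed simp

lemma prod_add_expansion_bounds:
  fixes p :: real and ys :: "real list"
  assumes "0 \<le> p" and "\<forall>y\<in>set ys. 0 \<le> y \<and> p + y \<le> 1"
  shows "0 \<le> (\<Prod>y\<leftarrow>ys. p + y) - p ^ length ys - p ^ (length ys - 1) * sum_list ys \<and>
         (\<Prod>y\<leftarrow>ys. p + y) - p ^ length ys - p ^ (length ys - 1) * sum_list ys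
           \<le> real (length ys) * sum_list (map (\<lambda>y. y\<^sup>2) ys)"
  using assms(2)
proof (induction ys)
  case (Cons y ys)
  define R where "R ys = (\<Prod>y\<leftarrow>ys. p + y) - p ^ length ys - p ^ (length ys - 1) * sum_list ys" for ys
  show ?case
  proof (cases "ys = []")
    case True
    then show ?thesis by simp
  next
    case False
    then obtain n where n: "length ys = Suc n" by (cases ys) auto
    define S where "S = sum_list ys"
    define Q where "Q = sum_list (map (\<lambda>y. y\<^sup>2) ys)"
    have y: "0 \<le> y" "p + y \<le> 1" and IH: "0 \<le> R ys" "R ys \<le> real (length ys) * Q"
      using Cons by (auto simp: R_def Q_def)
    have "0 \<le> S" "0 \<le> Q"
      unfolding S_def Q_def using Cons.prems by (auto intro!: sum_list_nonneg)
    have "0 \<le> p ^ n" "p ^ n \<le> 1"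
      using assms(1) y by (auto intro: power_le_one)
    have step: "R (y # ys) = (p + y) * R ys + y * p ^ n * S"
      by (simp add: R_def n S_def algebra_simps)
    have "(p + y) * R ys \<le> R ys"
      using IH y assms(1) by (simp add: mult_left_le_one_le)
    moreover have "y * p ^ n * S \<le> y * S"
      using mult_right_mono[OF mult_right_le_one_le[OF y(1) \<open>0 \<le> p ^ n\<close> \<open>p ^ n \<le> 1\<close>] \<open>0 \<le> S\<close>] .
    ultimately have "R (y # ys) \<le> R ys + y * S"
      unfolding step by (rule add_mono)
    also have "\<dots> \<le> real (length ys) * Q + (real (length ys) * y\<^sup>2 + Q) / 2"
      using IH(2) two_mult_sum_list_le[of y ys, unfolded mult.assoc] unfolding S_def Q_def by argo
    also have "\<dots> \<le> (real (length ys) + 1) * (y\<^sup>2 + Q)"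
      using \<open>0 \<le> Q\<close> zero_le_power2[of y] by (simp add: field_simps)
    finally have "R (y # ys) \<le> real (length (y # ys)) * sum_list (map (\<lambda>y. y\<^sup>2) (y # ys))"
      by (simp add: Q_def add.commute)
    moreover have "0 \<le> R (y # ys)"
      unfolding step using IH y assms(1) \<open>0 \<le> S\<close> by simp
    ultimately show ?thesis
      by (simp only: R_def)
  qed
qed simp

lemma GBP_I_prob_all_one_bounds:
  assumes "GBP_I M X p H c" and "finite S" and "S \<noteq> {}"
  defines "D \<equiv> measure M {\<omega> \<in> space M. \<forall>i\<in>S. X i \<omega> = 1} - p ^ card S
                 - c * p ^ (card S - 1) * gap_sum (\<lambda>d. real d powr (2*H - 2)) S"
  shows "0 \<le> D" and "D \<le> p * real (card S - 1) * c\<^sup>2 * gap_sum (\<lambda>d. real d powr (4*H - 4)) S"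
proof -
  from assms(1) have "0 < p" "H < 1" "0 \<le> c" "c < 1 - p"
    by (auto simp: GBP_I_def gbp_params_def)
  define l where "l = sorted_list_of_set S"
  have l: "sorted_wrt (<) l" "set l = S" "length l = card S" "l \<noteq> []"
    using assms(2,3) by (auto simp: l_def)
  define ys where "ys = map (\<lambda>d. c * real d powr (2*H - 2)) (gaps l)"
  have prob: "measure M {\<omega> \<in> space M. \<forall>i\<in>S. X i \<omega> = 1} = p * (\<Prod>y\<leftarrow>ys. p + y)"
    using assms(1) l prod_consecutive_diff_eq_prod_gaps[OF l(1), of "\<lambda>x. p + c * x powr (2*H - 2)"]
    by (auto simp: GBP_I_def ys_def o_def)
  have "\<forall>y\<in>set ys. 0 \<le> y \<and> p + y \<le> 1"
  proof
    fix y assume "y \<in> set ys"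
    then obtain d where d: "0 < d" "y = c * real d powr (2*H - 2)"
      using gaps_pos[OF l(1)] by (auto simp: ys_def)
    then have "real d powr (2*H - 2) \<le> 1"
      using \<open>H < 1\<close> powr_mono[of "2*H - 2" 0 "real d"] by auto
    then show "0 \<le> y \<and> p + y \<le> 1"
      using d \<open>0 \<le> c\<close> \<open>c < 1 - p\<close> mult_left_le[of "real d powr (2*H - 2)" c] by auto
  qed
  note expansion = prod_add_expansion_bounds[OF less_imp_le[OF \<open>0 < p\<close>] this]
  have sum_ys: "sum_list ys = c * gap_sum (\<lambda>d. real d powr (2*H - 2)) S"
    by (simp add: ys_def gap_sum_def l_def sum_list_const_mult o_def)
  have "(c * x powr (2*H - 2))\<^sup>2 = c\<^sup>2 * x powr (4*H - 4)" for x :: real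
    using powr_add[of x "2*H - 2" "2*H - 2"] by (simp add: power_mult_distrib power2_eq_square)
  then have sum_sq: "sum_list (map (\<lambda>y. y\<^sup>2) ys) = c\<^sup>2 * gap_sum (\<lambda>d. real d powr (4*H - 4)) S"
    by (simp add: ys_def gap_sum_def l_def sum_list_const_mult o_def)
  have len: "length ys = card S - 1"
    using l by (simp add: ys_def length_gaps)
  have "D = p * ((\<Prod>y\<leftarrow>ys. p + y) - p ^ length ys - p ^ (length ys - 1) * sum_list ys)"
  proof (cases "ys = []")
    case True
    moreover have "card S = 1"
      using True len l(3,4) by (cases l) auto
    ultimately show ?thesis
      using sum_ys unfolding D_def prob by simp
  next
    case False
    then obtain n where "length ys = Suc n" "card S = Suc (Suc n)"
      using len l by (cases ys) auto
    then show ?thesis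
      unfolding D_def prob by (simp add: sum_ys right_diff_distrib mult_ac)
  qed
  then show "0 \<le> D" and "D \<le> p * real (card S - 1) * c\<^sup>2 * gap_sum (\<lambda>d. real d powr (4*H - 4)) S"
    using expansion \<open>0 < p\<close> by (simp_all add: len sum_sq mult_left_mono mult.assoc)
qed

lemma GBP_I_sum_prob_all_one_bounds:
  fixes n k :: nat
  assumes "GBP_I M X p H c"
  defines "T \<equiv> (\<Sum>S | S \<subseteq> {1..n} \<and> card S = Suc k. measure M {\<omega> \<in> space M. \<forall>i\<in>S. X i \<omega> = 1})
                 - real (n choose Suc k) * p ^ Suc k
                 - c * p ^ k * real k * binom_conv (\<lambda>d. real d powr (2*H - 2)) k n"
  shows "0 \<le> T" and "T \<le> p * real k ^ 2 * c\<^sup>2 * binom_conv (\<lambda>d. real d powr (4*H - 4)) k n"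
proof -
  define F where "F = {S. S \<subseteq> {1..n} \<and> card S = Suc k}"
  define P where "P S = measure M {\<omega> \<in> space M. \<forall>i\<in>S. X i \<omega> = 1}" for S
  let ?D = "\<lambda>S. P S - p ^ card S - c * p ^ (card S - 1) * gap_sum (\<lambda>d. real d powr (2*H - 2)) S"
  have S: "finite S" "S \<noteq> {}" "card S = Suc k" if "S \<in> F" for S
    using that by (auto simp: F_def intro: finite_subset)
  have gap: "(\<Sum>S\<in>F. c * p ^ k * gap_sum (\<lambda>d. real d powr (2*H - 2)) S)
               = c * p ^ k * real k * binom_conv (\<lambda>d. real d powr (2*H - 2)) k n"
    using sum_subsets_gap_sum[of "\<lambda>d. real d powr (2*H - 2)" 1 n k]
    by (simp add: F_def sum_distrib_left[symmetric])
  have card: "card F = n choose Suc k"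
    using n_subsets[of "{1..n}" "Suc k"] by (simp add: F_def)
  have "T = sum P F - real (card F) * p ^ Suc k
              - (\<Sum>S\<in>F. c * p ^ k * gap_sum (\<lambda>d. real d powr (2*H - 2)) S)"
    unfolding T_def gap card by (simp add: F_def P_def)
  also have "\<dots> = (\<Sum>S\<in>F. P S - p ^ Suc k - c * p ^ k * gap_sum (\<lambda>d. real d powr (2*H - 2)) S)"
    by (simp add: sum_subtractf)
  also have "\<dots> = (\<Sum>S\<in>F. ?D S)"
    using S by (intro sum.cong) auto
  finally have T: "T = (\<Sum>S\<in>F. ?D S)" .
  show "0 \<le> T"
    unfolding T P_def using GBP_I_prob_all_one_bounds(1)[OF assms(1) S(1,2)] by (intro sum_nonneg) blast
  have "T \<le> (\<Sum>S\<in>F. p * real k * c\<^sup>2 * gap_sum (\<lambda>d. real d powr (4*H - 4)) S)"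
    unfolding T P_def using GBP_I_prob_all_one_bounds(2)[OF assms(1) S(1,2)] S(3) by (intro sum_mono) simp
  also have "\<dots> = p * real k * c\<^sup>2 * (\<Sum>S\<in>F. gap_sum (\<lambda>d. real d powr (4*H - 4)) S)"
    by (simp only: sum_distrib_left)
  also have "\<dots> = p * real k ^ 2 * c\<^sup>2 * binom_conv (\<lambda>d. real d powr (4*H - 4)) k n"
    using sum_subsets_gap_sum[of "\<lambda>d. real d powr (4*H - 4)" 1 n k] by (simp add: F_def power2_eq_square)
  finally show "T \<le> p * real k ^ 2 * c\<^sup>2 * binom_conv (\<lambda>d. real d powr (4*H - 4)) k n" .
qed

section \<open>Asymptotics of iterated power sums\<close>

lemma powr_succ_diff_approx:
  fixes x e :: real
  assumes "0 < x" "-1 < e"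
  shows "\<bar>((x + 1) powr (e + 1) - x powr (e + 1)) / (e + 1) - x powr e\<bar>
           \<le> \<bar>(x + 1) powr e - x powr e\<bar>"
proof -
  have "\<exists>z. x < z \<and> z < x + 1 \<and>
          (x + 1) powr (e + 1) - x powr (e + 1) = (x + 1 - x) * ((e + 1) * z powr e)"
    using assms by (intro MVT2) (auto intro!: derivative_eq_intros)
  then obtain z where z: "x < z" "z < x + 1"
    and mvt: "((x + 1) powr (e + 1) - x powr (e + 1)) / (e + 1) = z powr e"
    using assms by auto
  have "z powr e \<in> closed_segment (x powr e) ((x + 1) powr e)"
  proof (cases "0 \<le> e")
    case True
    then have "x powr e \<le> z powr e" "z powr e \<le> (x + 1) powr e"
      using z assms by (auto intro!: powr_mono2)
    then show ?thesis by (simp add: closed_segment_eq_real_ivl)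
  next
    case False
    then have "z powr e \<le> x powr e" "(x + 1) powr e \<le> z powr e"
      using z assms by (auto intro!: powr_mono2')
    then show ?thesis by (simp add: closed_segment_eq_real_ivl)
  qed
  then show ?thesis
    unfolding mvt by (auto simp: closed_segment_eq_real_ivl split: if_splits)
qed

lemma sum_abs_Suc_diff_monotone:
  fixes a :: "nat \<Rightarrow> real"
  assumes "m \<le> n"
    and "(\<forall>i\<in>{m..<n}. a i \<le> a (Suc i)) \<or> (\<forall>i\<in>{m..<n}. a (Suc i) \<le> a i)"
  shows "(\<Sum>i = m..<n. \<bar>a (Suc i) - a i\<bar>) = \<bar>a n - a m\<bar>"
  using assms(2)
proof
  assume up: "\<forall>i\<in>{m..<n}. a i \<le> a (Suc i)"
  then have "(\<Sum>i = m..<n. \<bar>a (Suc i) - a i\<bar>) = (\<Sum>i = m..<n. a (Suc i) - a i)"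
    by (intro sum.cong) auto
  moreover have "0 \<le> (\<Sum>i = m..<n. a (Suc i) - a i)"
    using up by (intro sum_nonneg) auto
  ultimately show ?thesis using sum_Suc_diff'[OF assms(1), of a] by simp
next
  assume down: "\<forall>i\<in>{m..<n}. a (Suc i) \<le> a i"
  then have "(\<Sum>i = m..<n. \<bar>a (Suc i) - a i\<bar>) = (\<Sum>i = m..<n. (- a (Suc i)) - (- a i))"
    by (intro sum.cong) auto
  moreover have "0 \<le> (\<Sum>i = m..<n. (- a (Suc i)) - (- a i))"
    using down by (intro sum_nonneg) auto
  ultimately show ?thesis using sum_Suc_diff'[OF assms(1), of "\<lambda>i. - a i"] by simp
qed

lemma sum_powr_approx:
  fixes e :: real
  assumes "-1 < e" and "1 \<le> m"
  shows "\<bar>(\<Sum>r<m. real r powr e) - real m powr (e + 1) / (e + 1)\<bar>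
           \<le> real m powr e + (1 + 1 / (e + 1))"
proof -
  let ?F = "\<lambda>r. real r powr (e + 1) / (e + 1)"
  \<comment> \<open>\<open>0 powr e = 0\<close>, so the \<open>r = 0\<close> term vanishes even for \<open>e \<le> 0\<close>\<close>
  have sum0: "(\<Sum>r<m. real r powr e) = (\<Sum>r = 1..<m. real r powr e)"
    by (rule sum.mono_neutral_right) auto
  have tele: "(\<Sum>r = 1..<m. ?F (Suc r) - ?F r) = ?F m - 1 / (e + 1)"
    using sum_Suc_diff'[OF assms(2), of ?F] by simp
  have mono: "(\<forall>r\<in>{1..<m}. real r powr e \<le> real (Suc r) powr e)
              \<or> (\<forall>r\<in>{1..<m}. real (Suc r) powr e \<le> real r powr e)"
  proof (cases "0 \<le> e")
    case True
    then show ?thesis by (auto intro!: powr_mono2)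
  next
    case False
    then show ?thesis by (auto intro!: powr_mono2')
  qed
  have "\<bar>real r powr e - (?F (Suc r) - ?F r)\<bar> \<le> \<bar>real (Suc r) powr e - real r powr e\<bar>"
    if "r \<in> {1..<m}" for r
    using powr_succ_diff_approx[of "real r" e] that assms(1)
    by (simp add: diff_divide_distrib abs_minus_commute add.commute)
  then have "\<bar>(\<Sum>r = 1..<m. real r powr e) - (\<Sum>r = 1..<m. ?F (Suc r) - ?F r)\<bar>
               \<le> (\<Sum>r = 1..<m. \<bar>real (Suc r) powr e - real r powr e\<bar>)"
    unfolding sum_subtractf[symmetric] by (rule order_trans[OF sum_abs sum_mono])
  also have "\<dots> = \<bar>real m powr e - 1\<bar>"
    using sum_abs_Suc_diff_monotone[OF assms(2) mono] by simp
  finally have "\<bar>(\<Sum>r = 1..<m. real r powr e) - (?F m - 1 / (e + 1))\<bar> \<le> \<bar>real m powr e - 1\<bar>"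
    unfolding tele .
  moreover have "0 < 1 / (e + 1)"
    using assms(1) by simp
  ultimately show ?thesis
    unfolding sum0 abs_le_iff by (smt (verit) powr_ge_zero)
qed

lemma sum_powr_asymp:
  fixes e :: real
  assumes "-1 < e"
  shows "(\<lambda>m. (\<Sum>r<m. real r powr e) - real m powr (e + 1) / (e + 1))
           \<in> o(\<lambda>m. real m powr (e + 1))"
proof -
  have "(\<lambda>m. (\<Sum>r<m. real r powr e) - real m powr (e + 1) / (e + 1))
          \<in> O(\<lambda>m. real m powr e + (1 + 1 / (e + 1)))"
  proof (rule landau_o.big_mono)
    show "\<forall>\<^sub>F m in sequentially. norm ((\<Sum>r<m. real r powr e) - real m powr (e + 1) / (e + 1))
            \<le> norm (real m powr e + (1 + 1 / (e + 1)))"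
      using eventually_ge_at_top[of 1] by eventually_elim (use sum_powr_approx assms in auto)
  qed
  also have "(\<lambda>m. real m powr e + (1 + 1 / (e + 1))) \<in> o(\<lambda>m. real m powr (e + 1))"
    using assms by (intro sum_in_smallo) real_asymp+
  finally show ?thesis .
qed

lemma sum_smallo_sum:
  fixes f g :: "nat \<Rightarrow> real"
  assumes "f \<in> o(g)" and "\<And>r. 0 \<le> g r"
    and "filterlim (\<lambda>m. \<Sum>r<m. g r) at_top at_top"
  shows "(\<lambda>m. \<Sum>r<m. f r) \<in> o(\<lambda>m. \<Sum>r<m. g r)"
proof (rule landau_o.smallI)
  fix \<epsilon> :: real
  assume "0 < \<epsilon>"
  then have "0 < \<epsilon> / 2" by simp
  from landau_o.smallD[OF assms(1) this] obtain N where N: "\<And>r. N \<le> r \<Longrightarrow> \<bar>f r\<bar> \<le> \<epsilon> / 2 * g r"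
    using assms(2) by (auto simp: eventually_at_top_linorder)
  define K where "K = (\<Sum>r<N. \<bar>f r\<bar>)"
  have "\<forall>\<^sub>F m in sequentially. K / (\<epsilon> / 2) \<le> (\<Sum>r<m. g r)"
    using assms(3) by (simp add: filterlim_at_top)
  then show "\<forall>\<^sub>F m in sequentially. norm (\<Sum>r<m. f r) \<le> \<epsilon> * norm (\<Sum>r<m. g r)"
    using eventually_ge_at_top[of N]
  proof eventually_elim
    case (elim m)
    have "\<bar>\<Sum>r<m. f r\<bar> \<le> (\<Sum>r<m. \<bar>f r\<bar>)" by (rule sum_abs)
    also have "\<dots> = K + (\<Sum>r = N..<m. \<bar>f r\<bar>)"
      unfolding K_def using elim(2) by (metis lessThan_atLeast0 sum.atLeastLessThan_concat le0)
    also have "(\<Sum>r = N..<m. \<bar>f r\<bar>) \<le> (\<Sum>r = N..<m. \<epsilon> / 2 * g r)"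
      by (intro sum_mono N) auto
    also have "\<dots> \<le> (\<Sum>r<m. \<epsilon> / 2 * g r)"
      using \<open>0 < \<epsilon>\<close> assms(2) by (intro sum_mono2) auto
    also have "K \<le> \<epsilon> / 2 * (\<Sum>r<m. g r)"
      using elim(1) \<open>0 < \<epsilon>\<close> by (simp add: field_simps)
    finally show ?case
      using assms(2) by (simp add: sum_distrib_left[symmetric] sum_divide_distrib[symmetric] sum_nonneg)
  qed
qed

lemma sum_asymp_powr:
  fixes a :: "nat \<Rightarrow> real"
  assumes "-1 < e" and "(\<lambda>r. a r - C * real r powr e) \<in> o(\<lambda>r. real r powr e)"
  shows "(\<lambda>m. (\<Sum>r<m. a r) - C / (e + 1) * real m powr (e + 1)) \<in> o(\<lambda>m. real m powr (e + 1))"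
proof -
  let ?S = "\<lambda>m. \<Sum>r<m. real r powr e"
  have power_sum: "(\<lambda>m. ?S m - real m powr (e + 1) / (e + 1)) \<in> o(\<lambda>m. real m powr (e + 1))"
    using sum_powr_asymp[OF assms(1)] .
  then have "?S \<sim>[sequentially] (\<lambda>m. real m powr (e + 1) / (e + 1))"
    using assms(1) by (intro smallo_imp_asymp_equiv) simp
  moreover have "filterlim (\<lambda>m. real m powr (e + 1) / (e + 1)) at_top sequentially"
    using assms(1) by real_asymp
  ultimately have "filterlim ?S at_top sequentially" and "?S \<in> O(\<lambda>m. real m powr (e + 1))"
    using assms(1) by (auto dest: asymp_equiv_at_top_transfer[OF asymp_equiv_symI] asymp_equiv_imp_bigo)
  then have errors: "(\<lambda>m. \<Sum>r<m. a r - C * real r powr e) \<in> o(\<lambda>m. real m powr (e + 1))"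
    using sum_smallo_sum[OF assms(2)] landau_o.small_big_trans by auto
  have "(\<lambda>m. (\<Sum>r<m. a r - C * real r powr e) + C * (?S m - real m powr (e + 1) / (e + 1)))
          \<in> o(\<lambda>m. real m powr (e + 1))"
    using errors power_sum by (intro sum_in_smallo) auto
  then show ?thesis
    by (simp add: sum_subtractf sum_distrib_left algebra_simps)
qed

lemma binom_conv_powr_asymp:
  fixes \<alpha> :: real
  assumes "-1 < \<alpha>"
  shows "(\<lambda>r. binom_conv (\<lambda>j. real j powr \<alpha>) k r
              - real r powr (\<alpha> + 1 + real k) / pochhammer (\<alpha> + 1) (Suc k))
           \<in> o(\<lambda>r. real r powr (\<alpha> + 1 + real k))"
proof (induction k)
  case 0
  have "binom_conv (\<lambda>j. real j powr \<alpha>) 0 r = (\<Sum>j<r. real j powr \<alpha>) + real r powr \<alpha>" for r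
  proof -
    have "(\<Sum>j<Suc r. real j powr \<alpha>) = (\<Sum>j = 1..r. real j powr \<alpha>)"
      by (rule sum.mono_neutral_right) auto
    then show ?thesis by (simp add: binom_conv_def)
  qed
  moreover have "(\<lambda>r. ((\<Sum>j<r. real j powr \<alpha>) - real r powr (\<alpha> + 1) / (\<alpha> + 1)) + real r powr \<alpha>)
                   \<in> o(\<lambda>r. real r powr (\<alpha> + 1))"
  proof -
    have "(\<lambda>r. real r powr \<alpha>) \<in> o(\<lambda>r. real r powr (\<alpha> + 1))" by real_asymp
    then show ?thesis by (intro sum_in_smallo(1)[OF sum_powr_asymp[OF assms]])
  qed
  ultimately show ?case by (simp add: algebra_simps)
next
  case (Suc k)
  let ?e = "\<alpha> + 1 + real k"
  have "pochhammer (\<alpha> + 1) (Suc (Suc k)) = pochhammer (\<alpha> + 1) (Suc k) * (?e + 1)"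
    by (simp add: pochhammer_Suc algebra_simps)
  moreover have "(\<lambda>m. (\<Sum>r<m. binom_conv (\<lambda>j. real j powr \<alpha>) k r)
                     - 1 / pochhammer (\<alpha> + 1) (Suc k) / (?e + 1) * real m powr (?e + 1))
                   \<in> o(\<lambda>m. real m powr (?e + 1))"
    using assms Suc.IH by (intro sum_asymp_powr) simp_all
  ultimately show ?case
    by (simp add: binom_conv_Suc_eq_sum add_ac)
qed

lemma binom_conv_powr_smallo:
  fixes \<alpha> \<gamma> :: real
  assumes "-1 < \<alpha>" and "\<gamma> < \<alpha>"
  shows "binom_conv (\<lambda>j. real j powr \<gamma>) k \<in> o(\<lambda>r. real r powr (\<alpha> + 1 + real k))"
proof -
  \<comment> \<open>\<open>\<gamma>\<close> may be \<open>\<le> -1\<close>; compare with an exponent \<open>\<beta> \<in> (-1, \<alpha>)\<close>, where the asymptotics apply\<close>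
  define \<beta> where "\<beta> = max \<gamma> ((\<alpha> - 1) / 2)"
  have \<beta>: "-1 < \<beta>" "\<beta> < \<alpha>" "\<gamma> \<le> \<beta>"
    using assms by (auto simp: \<beta>_def max_def)
  have "binom_conv (\<lambda>j. real j powr \<gamma>) k \<in> O(binom_conv (\<lambda>j. real j powr \<beta>) k)"
  proof (rule landau_o.big_mono, intro always_eventually allI)
    fix r
    have "0 \<le> binom_conv (\<lambda>j. real j powr \<gamma>) k r"
      unfolding binom_conv_def by (intro sum_nonneg) auto
    moreover have "binom_conv (\<lambda>j. real j powr \<gamma>) k r \<le> binom_conv (\<lambda>j. real j powr \<beta>) k r"
      using \<beta>(3) by (intro binom_conv_mono powr_mono) auto
    ultimately show "norm (binom_conv (\<lambda>j. real j powr \<gamma>) k r)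
                       \<le> norm (binom_conv (\<lambda>j. real j powr \<beta>) k r)"
      by simp
  qed
  also have "binom_conv (\<lambda>j. real j powr \<beta>) k \<in> O(\<lambda>r. real r powr (\<beta> + 1 + real k))"
  proof -
    let ?P = "pochhammer (\<beta> + 1) (Suc k)"
    have "(\<lambda>r. (binom_conv (\<lambda>j. real j powr \<beta>) k r - real r powr (\<beta> + 1 + real k) / ?P)
               + real r powr (\<beta> + 1 + real k) / ?P) \<in> O(\<lambda>r. real r powr (\<beta> + 1 + real k))"
      using landau_o.small_imp_big[OF binom_conv_powr_asymp[OF \<beta>(1), of k]]
      by (rule sum_in_bigo(1)) (use \<beta>(1) pochhammer_pos[of "\<beta> + 1" "Suc k"] in simp)
    then show ?thesis by simp
  qed
  also have "(\<lambda>r. real r powr (\<beta> + 1 + real k)) \<in> o(\<lambda>r. real r powr (\<alpha> + 1 + real k))"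
    using \<beta>(2) by real_asymp
  finally show ?thesis .
qed

lemma GBP_I_sum_prob_all_one_asymp:
  fixes k :: nat
  assumes "GBP_I M X p H c" and "1/2 < H"
  defines "e \<equiv> 2*H - 1 + real k"
  shows "(\<lambda>n. (\<Sum>S | S \<subseteq> {1..n} \<and> card S = Suc k. measure M {\<omega> \<in> space M. \<forall>i\<in>S. X i \<omega> = 1})
              - real (n choose Suc k) * p ^ Suc k
              - c * p ^ k * real k / pochhammer (2*H - 1) (Suc k) * real n powr e)
           \<in> o(\<lambda>n. real n powr e)"
proof -
  have "H < 1"
    using assms(1) by (auto simp: GBP_I_def gbp_params_def)
  define \<alpha> where "\<alpha> = 2*H - 2"
  have \<alpha>: "-1 < \<alpha>" "4*H - 4 < \<alpha>" "e = \<alpha> + 1 + real k" "2*H - 1 = \<alpha> + 1"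
    using assms(2) \<open>H < 1\<close> by (auto simp: \<alpha>_def e_def)
  define T where "T n = (\<Sum>S | S \<subseteq> {1..n} \<and> card S = Suc k. measure M {\<omega> \<in> space M. \<forall>i\<in>S. X i \<omega> = 1})
      - real (n choose Suc k) * p ^ Suc k - c * p ^ k * real k * binom_conv (\<lambda>d. real d powr \<alpha>) k n"
    for n
  have "T \<in> O(binom_conv (\<lambda>d. real d powr (4*H - 4)) k)"
  proof (rule bigoI[where c = "p * real k ^ 2 * c\<^sup>2"], intro always_eventually allI)
    fix n
    show "norm (T n) \<le> p * real k ^ 2 * c\<^sup>2 * norm (binom_conv (\<lambda>d. real d powr (4*H - 4)) k n)"
      using GBP_I_sum_prob_all_one_bounds[OF assms(1), of n k] unfolding T_def \<alpha>_def
      by (simp add: binom_conv_def sum_nonneg)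
  qed
  also have "binom_conv (\<lambda>d. real d powr (4*H - 4)) k \<in> o(\<lambda>n. real n powr e)"
    unfolding \<alpha>(3) using \<alpha>(1,2) by (rule binom_conv_powr_smallo)
  finally have remainder: "T \<in> o(\<lambda>n. real n powr e)" .
  have main: "(\<lambda>n. c * p ^ k * real k * (binom_conv (\<lambda>d. real d powr \<alpha>) k n
                 - real n powr e / pochhammer (\<alpha> + 1) (Suc k))) \<in> o(\<lambda>n. real n powr e)"
    unfolding \<alpha>(3) using binom_conv_powr_asymp[OF \<alpha>(1), of k] by simp
  show ?thesis
    using sum_in_smallo(1)[OF remainder main] unfolding \<alpha>(4)
    by (simp add: T_def algebra_simps)
qed

theorem lemma6p4:
  fixes M :: "'a measure" and X :: "nat \<Rightarrow> 'a \<Rightarrow> nat"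
    and p H c :: real and k :: nat
  assumes "GBP_I M X p H c"
    and "1/2 < H"
    and "2 \<le> k"
  shows "(\<lambda>n::nat.
            (\<Sum>S | S \<subseteq> {1..n} \<and> card S = k.
                measure M {\<omega> \<in> space M. \<forall>i\<in>S. X i \<omega> = 1})
            - real (n choose k) * p ^ k
            - (Gamma (2*H - 1) / Gamma (2*H + real k - 1))
                * (fact (k - 1) / fact (k - 2)) * c * p ^ (k - 1)
                * real n powr (2*H - 2 + real k))
         \<in> o(\<lambda>n::nat. real n powr (2*H - 2 + real k))"
proof -
  obtain m where k: "k = Suc (Suc m)"
    using assms(3) by (metis add_2_eq_Suc le_Suc_ex)
  have "2*H - 1 \<notin> \<int>\<^sub>\<le>\<^sub>0"
    using assms(2) by auto
  then have "Gamma (2*H - 1) / Gamma (2*H + real k - 1) = 1 / pochhammer (2*H - 1) k"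
    using pochhammer_Gamma[of "2*H - 1" k] by (simp add: algebra_simps)
  moreover have "fact (k - 1) / fact (k - 2) = (real (Suc m) :: real)"
    by (simp add: k del: of_nat_Suc)
  moreover have "2*H - 2 + real k = 2*H - 1 + real (Suc m)"
    by (simp add: k)
  ultimately show ?thesis
    using GBP_I_sum_prob_all_one_asymp[OF assms(1,2), of "Suc m"] by (simp add: k mult_ac)
qed

end
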